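(* Let $d\ge 1$, $0<\alpha<1$ and $\beta=1-\alpha$. Let $\sigma$ satisfy the Activation Assumption below, and let $\overline{A}\colon[0,1]\to\mathbb{R}^{d\times d}$ and $\overline{b}\colon[0,1]\to\mathbb{R}^d$ be deterministic functions for which there exist $M>0$, $\kappa>0$ with $\|\overline{A}_t-\overline{A}_s\|^2+\|\overline{b}_t-\overline{b}_s\|^2\le M|t-s|^\kappa$ for all $s,t\in[0,1]$. For each $L\in\mathbb{N}$ and $x\in\mathbb{R}^d$ define the (deterministic) hidden states $$h^{(L)}_0=x,\qquad h^{(L)}_{k+1}=h^{(L)}_k+L^{-\alpha}\,\sigma_d\!\left(A^{(L)}_k h^{(L)}_k+b^{(L)}_k\right),\quad k=0,\dots,L-1,$$ with $A^{(L)}_k=L^{-\beta}\overline{A}_{k/L}$ and $b^{(L)}_k=L^{-\beta}\overline{b}_{k/L}$. Assume there exist $p_1>4$ and $C_0>0$ such that $\sup_{0\le k\le L}\|h^{(L)}_k\|^{p_1}\le C_0$ for all $L$. Let $H$ be the solution of the linear ODE $$\frac{\mathrm{d}H_t}{\mathrm{d}t}=\overline{A}_tH_t+\overline{b}_t,\qquad H_0=x.$$ Then $\displaystyle\lim_{L\to\infty}\sup_{0\le t\le 1}\left\|H_t-h^{(L)}_{\lfloor tL\rfloor}\right\|=0.$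
   Context: $\|\cdot\|$ is the Euclidean norm on vectors and the Frobenius norm on matrices. For $\sigma\colon\mathbb{R}\to\mathbb{R}$, $\sigma_d(y)=(\sigma(y_1),\dots,\sigma(y_d))^\top$ denotes the componentwise extension to $y\in\mathbb{R}^d$. $\lfloor u\rfloor$ is the integer part of $u$. Activation Assumption: $\sigma\in\mathcal{C}^3(\mathbb{R},\mathbb{R})$, $\sigma(0)=0$, $\sigma'(0)=1$, and $\sigma'''$ is bounded on $\mathbb{R}$. *)

theory Defs
  imports "HOL-Analysis.Analysis"
begin

definition sigma_vec :: "(real \<Rightarrow> real) \<Rightarrow> real ^ 'n \<Rightarrow> real ^ 'n" where
  "sigma_vec \<sigma> y = (\<chi> i. \<sigma> (y $ i))"

definition activation_ok :: "(real \<Rightarrow> real) \<Rightarrow> bool" where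
  "activation_ok \<sigma> \<longleftrightarrow>
     (\<forall>x. \<sigma> differentiable at x) \<and>
     (\<forall>x. deriv \<sigma> differentiable at x) \<and>
     (\<forall>x. (deriv ^^ 2) \<sigma> differentiable at x) \<and>
     continuous_on UNIV ((deriv ^^ 3) \<sigma>) \<and>
     \<sigma> 0 = 0 \<and> deriv \<sigma> 0 = 1 \<and>
     (\<exists>B. \<forall>x. \<bar>(deriv ^^ 3) \<sigma> x\<bar> \<le> B)"

fun hidden :: "(real \<Rightarrow> real) \<Rightarrow> real \<Rightarrow> (real \<Rightarrow> real ^ 'n ^ 'n) \<Rightarrow> (real \<Rightarrow> real ^ 'n)
               \<Rightarrow> real ^ 'n \<Rightarrow> nat \<Rightarrow> nat \<Rightarrow> real ^ 'n" where
  "hidden \<sigma> \<alpha> Abar bbar x L 0 = x"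
| "hidden \<sigma> \<alpha> Abar bbar x L (Suc k) =
     hidden \<sigma> \<alpha> Abar bbar x L k +
     (real L powr (-\<alpha>)) *\<^sub>R sigma_vec \<sigma>
        (((real L powr (-(1 - \<alpha>))) *\<^sub>R Abar (real k / real L)) *v hidden \<sigma> \<alpha> Abar bbar x L k
         + (real L powr (-(1 - \<alpha>))) *\<^sub>R bbar (real k / real L))"

end

theory Submission
  imports Defs
begin

(* Since L powr -\<alpha> * L powr -(1 - \<alpha>) = 1 / L, every layer is an explicit Euler step of size 1 / L
   for H' = A H + b, perturbed by the defect L powr -\<alpha> * (\<sigma>(y) - y) with y = L powr -(1 - \<alpha>) * (A h + b).
   The moment bound keeps the hidden states bounded, so y = O(L powr -(1 - \<alpha>)), and \<sigma>'(0) = 1 makes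
   the defect o(1 / L) uniformly in the layer. The classical error analysis of the Euler method
   (consistency from the uniform continuity of H', stability from the discrete Gronwall inequality)
   then gives uniform convergence at the grid points k / L, and the uniform continuity of H covers
   the times in between. The exponent p1 > 4 is only used to obtain boundedness. *)

lemma norm_matrix_vector_mult_le:
  fixes A :: "real ^ 'n ^ 'm"
  shows "norm (A *v v) \<le> norm A * norm v"
proof -
  have "norm (A *v v) = L2_set (\<lambda>i. \<bar>A $ i \<bullet> v\<bar>) UNIV"
    by (simp add: norm_vec_def matrix_vector_mult_def inner_vec_def mult.commute)
  also have "\<dots> \<le> L2_set (\<lambda>i. norm (A $ i) * norm v) UNIV"
    by (intro L2_set_mono Cauchy_Schwarz_ineq2) simp
  also have "\<dots> = norm A * norm v"
    by (simp add: norm_vec_def L2_set_left_distrib)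
  finally show ?thesis .
qed

lemma powr_le_imp_le_powr_inverse:
  fixes a :: real
  assumes "0 \<le> a" "p > 0" "a powr p \<le> C"
  shows "a \<le> C powr (1 / p)"
proof -
  have "a = (a powr p) powr (1 / p)" using assms by (simp add: powr_powr)
  also have "\<dots> \<le> C powr (1 / p)" using assms by (intro powr_mono2) auto
  finally show ?thesis .
qed

lemma hoelder_continuous_on:
  fixes f :: "real \<Rightarrow> 'a::real_normed_vector"
  assumes "\<And>s t. s \<in> S \<Longrightarrow> t \<in> S \<Longrightarrow> (norm (f t - f s))\<^sup>2 \<le> M * \<bar>t - s\<bar> powr \<kappa>"
    and "M > 0" "\<kappa> > 0"
  shows "continuous_on S f"
  unfolding continuous_on_iff
proof (intro ballI allI impI)
  fix s e :: real
  assume s: "s \<in> S" and e: "0 < e"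
  define d where "d = (e\<^sup>2 / M) powr (1 / \<kappa>)"
  have "dist (f t) (f s) < e" if t: "t \<in> S" and dt: "dist t s < d" for t
  proof -
    have "\<bar>t - s\<bar> powr \<kappa> < d powr \<kappa>"
      using dt assms by (intro powr_less_mono2) (auto simp: dist_real_def)
    also have "\<dots> = e\<^sup>2 / M"
      using e assms by (simp add: d_def powr_powr)
    finally have "(norm (f t - f s))\<^sup>2 < e\<^sup>2"
      using assms(1)[OF s t] \<open>M > 0\<close> by (simp add: field_simps)
    then show ?thesis
      using e by (simp add: dist_norm power_less_imp_less_base)
  qed
  moreover have "d > 0" using e assms by (simp add: d_def)
  ultimately show "\<exists>d>0. \<forall>t\<in>S. dist t s < d \<longrightarrow> dist (f t) (f s) < e" by blast
qed

lemma nat_floor_mult_grid: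
  assumes "t \<in> {0..1}" "n > 0"
  shows "nat \<lfloor>t * real n\<rfloor> \<le> n" and "\<bar>t - real (nat \<lfloor>t * real n\<rfloor>) / real n\<bar> < 1 / real n"
proof -
  have k: "real (nat \<lfloor>t * real n\<rfloor>) = of_int \<lfloor>t * real n\<rfloor>"
    using assms by simp
  have "t * real n \<le> real n" using assms by (simp add: mult_left_le_one_le)
  then show "nat \<lfloor>t * real n\<rfloor> \<le> n"
    using k by linarith
  have "0 \<le> t * real n - real (nat \<lfloor>t * real n\<rfloor>)" "t * real n - real (nat \<lfloor>t * real n\<rfloor>) < 1"
    using k by linarith+
  moreover have "t - real (nat \<lfloor>t * real n\<rfloor>) / real n = (t * real n - real (nat \<lfloor>t * real n\<rfloor>)) / real n"
    using assms by (simp add: field_simps)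
  ultimately show "\<bar>t - real (nat \<lfloor>t * real n\<rfloor>) / real n\<bar> < 1 / real n"
    using assms by (simp add: divide_strict_right_mono)
qed

lemma SUP_tendsto_zero_if_eventually_uniform:
  fixes f :: "nat \<Rightarrow> 'a \<Rightarrow> real"
  assumes "S \<noteq> {}" "\<And>n t. t \<in> S \<Longrightarrow> 0 \<le> f n t"
    and "\<And>r. r > 0 \<Longrightarrow> eventually (\<lambda>n. \<forall>t\<in>S. f n t \<le> r) sequentially"
  shows "(\<lambda>n. SUP t\<in>S. f n t) \<longlonglongrightarrow> 0"
proof (rule order_tendstoI)
  fix r :: real
  assume "r > 0"
  show "eventually (\<lambda>n. (SUP t\<in>S. f n t) < r) sequentially"
  proof (rule eventually_mono[OF assms(3)])
    show "r / 2 > 0" using \<open>r > 0\<close> by simp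
    fix n assume "\<forall>t\<in>S. f n t \<le> r / 2"
    then have "(SUP t\<in>S. f n t) \<le> r / 2" using assms(1) by (intro cSUP_least) auto
    then show "(SUP t\<in>S. f n t) < r" using \<open>r > 0\<close> by simp
  qed
next
  fix r :: real
  assume "r < 0"
  obtain t where "t \<in> S" using assms(1) by blast
  show "eventually (\<lambda>n. r < (SUP t\<in>S. f n t)) sequentially"
  proof (rule eventually_mono[OF assms(3)[of 1]])
    fix n assume "\<forall>t\<in>S. f n t \<le> 1"
    then have "f n t \<le> (SUP t\<in>S. f n t)" using \<open>t \<in> S\<close> by (intro cSUP_upper bdd_aboveI2) auto
    then show "r < (SUP t\<in>S. f n t)" using assms(2)[OF \<open>t \<in> S\<close>, of n] \<open>r < 0\<close> by linarith
  qed simp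
qed

lemma uniformly_continuous_on_eventually_modulus:
  fixes f :: "real \<Rightarrow> 'a::metric_space"
  assumes "uniformly_continuous_on S f" "\<epsilon> > 0"
  shows "eventually (\<lambda>n. \<forall>s\<in>S. \<forall>t\<in>S. \<bar>s - t\<bar> \<le> 1 / real n \<longrightarrow> dist (f s) (f t) \<le> \<epsilon>) sequentially"
proof -
  obtain d where "d > 0" and d: "\<And>s t. s \<in> S \<Longrightarrow> t \<in> S \<Longrightarrow> dist s t < d \<Longrightarrow> dist (f s) (f t) < \<epsilon>"
    using assms unfolding uniformly_continuous_on_def by metis
  have "eventually (\<lambda>n. 1 / real n < d) sequentially"
    using \<open>d > 0\<close> by (intro order_tendstoD(2)[OF lim_1_over_n])
  then show ?thesis
  proof eventually_elim
    case (elim n)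
    show ?case
      using d elim by (force simp: dist_real_def intro: less_imp_le)
  qed
qed

lemma discrete_gronwall:
  fixes e :: "nat \<Rightarrow> real"
  assumes step: "\<And>k. k < n \<Longrightarrow> e (Suc k) \<le> (1 + a) * e k + c"
    and "e 0 = 0" "a \<ge> 0" "c \<ge> 0"
  shows "k \<le> n \<Longrightarrow> e k \<le> exp (real k * a) * (real k * c)"
proof (induction k)
  case 0
  then show ?case using assms by simp
next
  case (Suc k)
  have "e (Suc k) \<le> (1 + a) * e k + c" using step Suc by simp
  also have "\<dots> \<le> (1 + a) * (exp (real k * a) * (real k * c)) + c"
    using Suc assms by (intro add_right_mono mult_left_mono) simp_all
  also have "\<dots> \<le> exp a * (exp (real k * a) * (real k * c)) + exp (real (Suc k) * a) * c"
    using assms by (intro add_mono mult_right_mono) (simp_all add: mult_le_cancel_right1)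
  also have "\<dots> = exp (real (Suc k) * a) * (real (Suc k) * c)"
    by (simp add: algebra_simps flip: exp_add)
  finally show ?case .
qed

lemma euler_method_step_error:
  fixes H :: "real \<Rightarrow> 'a::real_normed_vector" and G :: "real \<Rightarrow> 'a \<Rightarrow> 'a" and h :: "nat \<Rightarrow> 'a"
  assumes ode: "\<And>t. t \<in> {0..1} \<Longrightarrow> (H has_vector_derivative G t (H t)) (at t within {0..1})"
    and lipschitz: "\<And>t u v. t \<in> {0..1} \<Longrightarrow> norm (G t u - G t v) \<le> K * norm (u - v)"
    and modulus: "\<And>s t. s \<in> {0..1} \<Longrightarrow> t \<in> {0..1} \<Longrightarrow> \<bar>s - t\<bar> \<le> 1 / real n \<Longrightarrow>
        norm (G s (H s) - G t (H t)) \<le> \<epsilon>"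
    and defect: "norm (h (Suc k) - h k - (1 / real n) *\<^sub>R G (real k / real n) (h k)) \<le> \<delta> / real n"
    and "k < n"
  shows "norm (H (real (Suc k) / real n) - h (Suc k))
    \<le> (1 + K / real n) * norm (H (real k / real n) - h k) + (\<epsilon> + \<delta>) / real n"
proof -
  define t0 t1 where "t0 = real k / real n" and "t1 = real (Suc k) / real n"
  have t01: "t0 \<in> {0..1}" "t1 \<in> {0..1}" "t1 - t0 = 1 / real n" "t0 \<le> t1"
    using \<open>k < n\<close> by (auto simp: t0_def t1_def diff_divide_distrib[symmetric] divide_right_mono)
  have local: "norm (H t1 - H t0 - (t1 - t0) *\<^sub>R G t0 (H t0)) \<le> \<epsilon> / real n"
  proof -
    have "norm (H t1 - H t0 - (t1 - t0) *\<^sub>R G t0 (H t0)) \<le> norm (t1 - t0) * \<epsilon>"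
    proof (rule vector_differentiable_bound_linearization[where S = "{t0..t1}"])
      show "(H has_vector_derivative G s (H s)) (at s within {t0..t1})" if "s \<in> {t0..t1}" for s
        using ode[of s] that t01 by (auto intro: has_vector_derivative_within_subset)
      show "norm (G s (H s) - G t0 (H t0)) \<le> \<epsilon>" if "s \<in> {t0..t1}" for s
        using modulus[of s t0] that t01 by auto
    qed (use t01 in \<open>auto simp: closed_segment_eq_real_ivl\<close>)
    then show ?thesis using t01 by simp
  qed
  have tri: "norm (a + b + c - d) \<le> norm a + norm b + norm c + norm d" for a b c d :: 'a
    using norm_triangle_ineq[of a b] norm_triangle_ineq[of "a + b" c] norm_triangle_ineq4[of "a + b + c" d]
    by linarith
  have "H t1 - h (Suc k) = (H t0 - h k) + (1 / real n) *\<^sub>R (G t0 (H t0) - G t0 (h k))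
      + (H t1 - H t0 - (t1 - t0) *\<^sub>R G t0 (H t0))
      - (h (Suc k) - h k - (1 / real n) *\<^sub>R G t0 (h k))"
    using t01 by (simp add: algebra_simps)
  then have "norm (H t1 - h (Suc k)) \<le> norm (H t0 - h k) + (1 / real n) * norm (G t0 (H t0) - G t0 (h k))
      + norm (H t1 - H t0 - (t1 - t0) *\<^sub>R G t0 (H t0))
      + norm (h (Suc k) - h k - (1 / real n) *\<^sub>R G t0 (h k))"
    using tri by (metis abs_of_nonneg norm_scaleR of_nat_0_le_iff zero_le_divide_1_iff)
  also have "\<dots> \<le> norm (H t0 - h k) + (1 / real n) * (K * norm (H t0 - h k)) + \<epsilon> / real n + \<delta> / real n"
    using lipschitz[OF t01(1), of "H t0" "h k"] local defect \<open>k < n\<close> unfolding t0_def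
    by (smt (verit) divide_nonneg_nonneg mult_left_mono of_nat_0_le_iff zero_le_one)
  also have "\<dots> = (1 + K / real n) * norm (H t0 - h k) + (\<epsilon> + \<delta>) / real n"
    by (simp add: algebra_simps add_divide_distrib)
  finally show ?thesis unfolding t0_def t1_def .
qed

lemma euler_method_error:
  fixes H :: "real \<Rightarrow> 'a::real_normed_vector" and G :: "real \<Rightarrow> 'a \<Rightarrow> 'a" and h :: "nat \<Rightarrow> 'a"
  assumes ode: "\<And>t. t \<in> {0..1} \<Longrightarrow> (H has_vector_derivative G t (H t)) (at t within {0..1})"
    and lipschitz: "\<And>t u v. t \<in> {0..1} \<Longrightarrow> norm (G t u - G t v) \<le> K * norm (u - v)"
    and modulus: "\<And>s t. s \<in> {0..1} \<Longrightarrow> t \<in> {0..1} \<Longrightarrow> \<bar>s - t\<bar> \<le> 1 / real n \<Longrightarrow>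
        norm (G s (H s) - G t (H t)) \<le> \<epsilon>"
    and defect: "\<And>k. k < n \<Longrightarrow>
        norm (h (Suc k) - h k - (1 / real n) *\<^sub>R G (real k / real n) (h k)) \<le> \<delta> / real n"
    and "h 0 = H 0" "n > 0" "K \<ge> 0" "\<epsilon> \<ge> 0" "\<delta> \<ge> 0" "k \<le> n"
  shows "norm (H (real k / real n) - h k) \<le> exp K * (\<epsilon> + \<delta>)"
proof -
  have "norm (H (real k / real n) - h k)
      \<le> exp (real k * (K / real n)) * (real k * ((\<epsilon> + \<delta>) / real n))"
    by (rule discrete_gronwall[where e = "\<lambda>k. norm (H (real k / real n) - h k)"])
      (use euler_method_step_error[OF ode lipschitz modulus defect] assms in auto)
  also have "\<dots> \<le> exp K * (\<epsilon> + \<delta>)"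
  proof (intro mult_mono)
    have "real k * K \<le> real n * K" "real k * (\<epsilon> + \<delta>) \<le> real n * (\<epsilon> + \<delta>)"
      using assms by (simp_all add: mult_right_mono)
    then show "exp (real k * (K / real n)) \<le> exp K" "real k * ((\<epsilon> + \<delta>) / real n) \<le> \<epsilon> + \<delta>"
      using \<open>n > 0\<close> by (simp_all add: field_simps)
  qed (use assms in auto)
  finally show ?thesis .
qed

lemma euler_method_interpolation_error:
  fixes H :: "real \<Rightarrow> 'a::real_normed_vector" and G :: "real \<Rightarrow> 'a \<Rightarrow> 'a" and h :: "nat \<Rightarrow> 'a"
  assumes ode: "\<And>t. t \<in> {0..1} \<Longrightarrow> (H has_vector_derivative G t (H t)) (at t within {0..1})"
    and lipschitz: "\<And>t u v. t \<in> {0..1} \<Longrightarrow> norm (G t u - G t v) \<le> K * norm (u - v)"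
    and modulus: "\<And>s t. s \<in> {0..1} \<Longrightarrow> t \<in> {0..1} \<Longrightarrow> \<bar>s - t\<bar> \<le> 1 / real n \<Longrightarrow>
        norm (G s (H s) - G t (H t)) \<le> \<epsilon>"
    and modulus_H: "\<And>s t. s \<in> {0..1} \<Longrightarrow> t \<in> {0..1} \<Longrightarrow> \<bar>s - t\<bar> \<le> 1 / real n \<Longrightarrow>
        norm (H s - H t) \<le> \<eta>"
    and defect: "\<And>k. k < n \<Longrightarrow>
        norm (h (Suc k) - h k - (1 / real n) *\<^sub>R G (real k / real n) (h k)) \<le> \<delta> / real n"
    and "h 0 = H 0" "n > 0" "K \<ge> 0" "\<epsilon> \<ge> 0" "\<delta> \<ge> 0" "t \<in> {0..1}"
  shows "norm (H t - h (nat \<lfloor>t * real n\<rfloor>)) \<le> \<eta> + exp K * (\<epsilon> + \<delta>)"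
proof -
  define k where "k = nat \<lfloor>t * real n\<rfloor>"
  have "k \<le> n" "\<bar>t - real k / real n\<bar> < 1 / real n"
    using nat_floor_mult_grid[OF \<open>t \<in> {0..1}\<close> \<open>n > 0\<close>] by (simp_all add: k_def)
  then have "norm (H t - H (real k / real n)) \<le> \<eta>"
    using \<open>n > 0\<close> \<open>t \<in> {0..1}\<close> by (intro modulus_H) auto
  moreover have "norm (H (real k / real n) - h k) \<le> exp K * (\<epsilon> + \<delta>)"
    using \<open>k \<le> n\<close> by (intro euler_method_error[OF ode lipschitz modulus defect]) (use assms in auto)
  ultimately show ?thesis
    using norm_triangle_ineq[of "H t - H (real k / real n)" "H (real k / real n) - h k"]
    by (simp add: k_def)
qed

lemma activation_ok_has_derivative_at_0:
  assumes "activation_ok \<sigma>"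
  shows "(\<sigma> has_real_derivative 1) (at 0)" and "\<sigma> 0 = 0"
  using assms DERIV_deriv_iff_real_differentiable unfolding activation_ok_def by metis+

lemma sigma_vec_near_identity:
  assumes "(\<sigma> has_real_derivative 1) (at 0)" "\<sigma> 0 = 0" "c > 0"
  obtains d where "d > 0"
    and "\<And>y :: real ^ 'n. norm y < d \<Longrightarrow> norm (sigma_vec \<sigma> y - y) \<le> c * norm y"
proof -
  obtain d where d: "d > 0" and near: "\<And>z. \<bar>z\<bar> < d \<Longrightarrow> \<bar>\<sigma> z - z\<bar> \<le> c * \<bar>z\<bar>"
    using assms unfolding has_field_derivative_def has_derivative_within_alt by force
  have "norm (sigma_vec \<sigma> y - y) \<le> c * norm y" if "norm y < d" for y :: "real ^ 'n"
  proof -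
    have "norm (sigma_vec \<sigma> y - y) = L2_set (\<lambda>i. \<bar>\<sigma> (y $ i) - y $ i\<bar>) UNIV"
      by (simp add: sigma_vec_def norm_vec_def)
    also have "\<dots> \<le> L2_set (\<lambda>i. c * \<bar>y $ i\<bar>) UNIV"
      using that component_le_norm_cart[of y]
      by (intro L2_set_mono near) (auto intro: order.strict_trans1)
    also have "\<dots> = c * norm y"
      using \<open>c > 0\<close> by (simp add: norm_vec_def L2_set_right_distrib)
    finally show ?thesis .
  qed
  with d that show ?thesis by blast
qed

lemma hidden_Suc_scaleR:
  "hidden \<sigma> \<alpha> Abar bbar x L (Suc k) = hidden \<sigma> \<alpha> Abar bbar x L k + (real L powr -\<alpha>) *\<^sub>R
     sigma_vec \<sigma> ((real L powr -(1 - \<alpha>)) *\<^sub>R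
       (Abar (real k / real L) *v hidden \<sigma> \<alpha> Abar bbar x L k + bbar (real k / real L)))"
  by (simp add: scaleR_add_right scaleR_matrix_vector_assoc)

lemma hidden_step_defect:
  fixes Abar :: "real \<Rightarrow> real ^ 'n ^ 'n" and bbar :: "real \<Rightarrow> real ^ 'n"
    and \<sigma> :: "real \<Rightarrow> real" and \<alpha> :: real and x :: "real ^ 'n" and L k :: nat
  defines "w \<equiv> Abar (real k / real L) *v hidden \<sigma> \<alpha> Abar bbar x L k + bbar (real k / real L)"
  assumes "L > 0" "c \<ge> 0"
    and near: "\<And>y :: real ^ 'n. norm y < d \<Longrightarrow> norm (sigma_vec \<sigma> y - y) \<le> c * norm y"
    and "norm w \<le> V" "real L powr -(1 - \<alpha>) * V < d"
  shows "norm (hidden \<sigma> \<alpha> Abar bbar x L (Suc k) - hidden \<sigma> \<alpha> Abar bbar x L k - (1 / real L) *\<^sub>R w)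
    \<le> c * V / real L"
proof -
  define y where "y = (real L powr -(1 - \<alpha>)) *\<^sub>R w"
  have scales: "real L powr -\<alpha> * real L powr -(1 - \<alpha>) = 1 / real L"
    unfolding powr_add[symmetric] by simp
  have ny: "norm y \<le> real L powr -(1 - \<alpha>) * V"
    using assms by (simp add: y_def mult_left_mono)
  have "hidden \<sigma> \<alpha> Abar bbar x L (Suc k) - hidden \<sigma> \<alpha> Abar bbar x L k - (1 / real L) *\<^sub>R w
      = (real L powr -\<alpha>) *\<^sub>R (sigma_vec \<sigma> y - y)"
    unfolding hidden_Suc_scaleR y_def w_def by (simp add: scaleR_diff_right flip: scales)
  then have "norm (hidden \<sigma> \<alpha> Abar bbar x L (Suc k) - hidden \<sigma> \<alpha> Abar bbar x L k - (1 / real L) *\<^sub>R w)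
      = real L powr -\<alpha> * norm (sigma_vec \<sigma> y - y)"
    by simp
  also have "\<dots> \<le> real L powr -\<alpha> * (c * norm y)"
    using ny assms by (intro mult_left_mono near) auto
  also have "\<dots> \<le> real L powr -\<alpha> * (c * (real L powr -(1 - \<alpha>) * V))"
    using ny \<open>c \<ge> 0\<close> by (intro mult_left_mono) auto
  also have "\<dots> = c * V * (real L powr -\<alpha> * real L powr -(1 - \<alpha>))"
    by (simp only: mult_ac)
  also have "\<dots> = c * V / real L"
    unfolding scales by simp
  finally show ?thesis .
qed

lemma hidden_defect_eventually:
  fixes Abar :: "real \<Rightarrow> real ^ 'n ^ 'n" and bbar :: "real \<Rightarrow> real ^ 'n"
  assumes "\<alpha> < 1" "(\<sigma> has_real_derivative 1) (at 0)" "\<sigma> 0 = 0"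
    and bounded: "\<And>L k. 1 \<le> L \<Longrightarrow> k \<le> L \<Longrightarrow> norm (hidden \<sigma> \<alpha> Abar bbar x L k) \<le> R"
    and boundA: "\<And>t. t \<in> {0..1} \<Longrightarrow> norm (Abar t) \<le> KA"
    and boundb: "\<And>t. t \<in> {0..1} \<Longrightarrow> norm (bbar t) \<le> Kb"
    and "\<delta> > 0"
  shows "eventually (\<lambda>L. \<forall>k<L. norm (hidden \<sigma> \<alpha> Abar bbar x L (Suc k) - hidden \<sigma> \<alpha> Abar bbar x L k
      - (1 / real L) *\<^sub>R (Abar (real k / real L) *v hidden \<sigma> \<alpha> Abar bbar x L k + bbar (real k / real L)))
      \<le> \<delta> / real L) sequentially"
proof -
  define V where "V = KA * R + Kb"
  have "0 \<le> KA" "0 \<le> R" "0 \<le> Kb"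
    using boundA[of 0] bounded[of 1 0] boundb[of 0] by (auto intro: order_trans[OF norm_ge_zero])
  then have "V \<ge> 0" by (simp add: V_def)
  define c where "c = \<delta> / (V + 1)"
  have c: "c > 0" "c * V \<le> \<delta>"
    using \<open>V \<ge> 0\<close> \<open>\<delta> > 0\<close> by (auto simp: c_def field_simps)
  obtain d where "d > 0" and near: "\<And>y :: real ^ 'n. norm y < d \<Longrightarrow> norm (sigma_vec \<sigma> y - y) \<le> c * norm y"
    using sigma_vec_near_identity assms(2,3) c(1) by blast
  have "((\<lambda>L. real L powr -(1 - \<alpha>) * V) \<longlongrightarrow> 0 * V) sequentially"
    using \<open>\<alpha> < 1\<close> by (intro tendsto_mult tendsto_const tendsto_neg_powr filterlim_real_sequentially) auto
  then have "eventually (\<lambda>L. real L powr -(1 - \<alpha>) * V < d) sequentially"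
    using \<open>d > 0\<close> by (simp add: order_tendstoD(2))
  then show ?thesis
    using eventually_ge_at_top[of 1]
  proof eventually_elim
    case (elim L)
    have w: "norm (Abar (real k / real L) *v hidden \<sigma> \<alpha> Abar bbar x L k + bbar (real k / real L)) \<le> V"
      if "k < L" for k
    proof -
      have t: "real k / real L \<in> {0..1}" using that by auto
      have "norm (Abar (real k / real L) *v hidden \<sigma> \<alpha> Abar bbar x L k) \<le> KA * R"
        using order_trans[OF norm_matrix_vector_mult_le mult_mono] boundA[OF t] bounded[of L k] elim that \<open>0 \<le> KA\<close>
        by simp
      then show ?thesis
        using boundb[OF t] norm_triangle_ineq unfolding V_def by (smt (verit))
    qed
    have "c * V / real L \<le> \<delta> / real L" using c by (simp add: divide_right_mono)
    then show ?case
      using hidden_step_defect[OF _ _ near w] elim c by fastforce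
  qed
qed

lemma eventually_hidden_uniformly_close_to_ode:
  fixes Abar :: "real \<Rightarrow> real ^ 'n ^ 'n" and bbar :: "real \<Rightarrow> real ^ 'n" and H :: "real \<Rightarrow> real ^ 'n"
  assumes "\<alpha> < 1" "(\<sigma> has_real_derivative 1) (at 0)" "\<sigma> 0 = 0"
    and contA: "continuous_on {0..1} Abar" and contb: "continuous_on {0..1} bbar"
    and bounded: "\<And>L k. 1 \<le> L \<Longrightarrow> k \<le> L \<Longrightarrow> norm (hidden \<sigma> \<alpha> Abar bbar x L k) \<le> R"
    and "H 0 = x"
    and ode: "\<And>t. t \<in> {0..1} \<Longrightarrow> (H has_vector_derivative (Abar t *v H t + bbar t)) (at t within {0..1})"
    and "r > 0"
  shows "eventually (\<lambda>L. \<forall>t\<in>{0..1}. norm (H t - hidden \<sigma> \<alpha> Abar bbar x L (nat \<lfloor>t * real L\<rfloor>)) \<le> r)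
    sequentially"
proof -
  obtain KA where "KA \<ge> 0" and boundA: "\<And>t. t \<in> {0..1} \<Longrightarrow> norm (Abar t) \<le> KA"
    using continuous_on_compact_bound[OF compact_Icc contA] by blast
  obtain Kb where boundb: "\<And>t. t \<in> {0..1} \<Longrightarrow> norm (bbar t) \<le> Kb"
    using continuous_on_compact_bound[OF compact_Icc contb] by blast
  define G where "G t v = Abar t *v v + bbar t" for t v
  have lipschitz: "norm (G t u - G t v) \<le> KA * norm (u - v)" if "t \<in> {0..1}" for t u v
    using norm_matrix_vector_mult_le[of "Abar t" "u - v"] boundA[OF that]
    by (simp add: G_def matrix_vector_mult_diff_distrib) (meson mult_right_mono norm_ge_zero order_trans)
  have contH: "continuous_on {0..1} H"
    using ode by (meson continuous_on_eq_continuous_within has_vector_derivative_continuous)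
  have "continuous_on {0..1} (\<lambda>t. G t (H t))"
    unfolding G_def matrix_vector_mult_def by (intro continuous_intros contA contb contH)
  with contH have uc: "uniformly_continuous_on {0..1} H" "uniformly_continuous_on {0..1} (\<lambda>t. G t (H t))"
    by (simp_all add: compact_uniformly_continuous)
  define \<epsilon> where "\<epsilon> = r / (1 + 2 * exp KA)"
  have "\<epsilon> > 0" using \<open>r > 0\<close> by (simp add: \<epsilon>_def add_pos_pos)
  have "1 + 2 * exp KA \<noteq> 0" using exp_gt_zero[of KA] by linarith
  then have "\<epsilon> * (1 + 2 * exp KA) = r" by (simp add: \<epsilon>_def)
  then have r: "\<epsilon> + exp KA * (\<epsilon> + \<epsilon>) = r" by (simp add: algebra_simps)
  have "eventually (\<lambda>L. \<forall>k<L. norm (hidden \<sigma> \<alpha> Abar bbar x L (Suc k) - hidden \<sigma> \<alpha> Abar bbar x L k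
      - (1 / real L) *\<^sub>R G (real k / real L) (hidden \<sigma> \<alpha> Abar bbar x L k)) \<le> \<epsilon> / real L) sequentially"
    unfolding G_def by (rule hidden_defect_eventually[where R = R and KA = KA and Kb = Kb])
      (use assms boundA boundb \<open>\<epsilon> > 0\<close> in auto)
  then show ?thesis
    using eventually_ge_at_top[of 1] uniformly_continuous_on_eventually_modulus[OF uc(1) \<open>\<epsilon> > 0\<close>]
      uniformly_continuous_on_eventually_modulus[OF uc(2) \<open>\<epsilon> > 0\<close>]
  proof eventually_elim
    case (elim L)
    have "norm (H t - hidden \<sigma> \<alpha> Abar bbar x L (nat \<lfloor>t * real L\<rfloor>)) \<le> \<epsilon> + exp KA * (\<epsilon> + \<epsilon>)"
      if "t \<in> {0..1}" for t
      by (rule euler_method_interpolation_error[where G = G])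
        (use that elim ode lipschitz \<open>H 0 = x\<close> \<open>KA \<ge> 0\<close> \<open>\<epsilon> > 0\<close> in \<open>auto simp: G_def dist_norm\<close>)
    then show ?case using r by simp
  qed
qed

theorem theorem1:
  fixes \<sigma> :: "real \<Rightarrow> real" and \<alpha> :: real
    and Abar :: "real \<Rightarrow> real ^ 'n ^ 'n" and bbar :: "real \<Rightarrow> real ^ 'n"
    and x :: "real ^ 'n" and H :: "real \<Rightarrow> real ^ 'n"
  assumes alpha: "0 < \<alpha>" "\<alpha> < 1"
    and act: "activation_ok \<sigma>"
    and hoelder: "\<exists>M>0. \<exists>\<kappa>>0. \<forall>s\<in>{0..1}. \<forall>t\<in>{0..1}.
        (norm (Abar t - Abar s))\<^sup>2 + (norm (bbar t - bbar s))\<^sup>2 \<le> M * \<bar>t - s\<bar> powr \<kappa>"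
    and bounded: "\<exists>p1>4. \<exists>C0>0. \<forall>L\<ge>1. \<forall>k\<le>L.
        norm (hidden \<sigma> \<alpha> Abar bbar x L k) powr p1 \<le> C0"
    and H0: "H 0 = x"
    and Hode: "\<forall>t\<in>{0..1}. (H has_vector_derivative (Abar t *v H t + bbar t)) (at t within {0..1})"
  shows "(\<lambda>L. SUP t\<in>{0..1}. norm (H t - hidden \<sigma> \<alpha> Abar bbar x L (nat \<lfloor>t * real L\<rfloor>)))
           \<longlonglongrightarrow> 0"
proof -
  obtain M \<kappa> where "M > 0" "\<kappa> > 0" and hoelder_sum: "\<And>s t. s \<in> {0..1} \<Longrightarrow> t \<in> {0..1} \<Longrightarrow>
      (norm (Abar t - Abar s))\<^sup>2 + (norm (bbar t - bbar s))\<^sup>2 \<le> M * \<bar>t - s\<bar> powr \<kappa>"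
    using hoelder by blast
  have "continuous_on {0..1} Abar" "continuous_on {0..1} bbar"
    using hoelder_sum by (intro hoelder_continuous_on[OF _ \<open>M > 0\<close> \<open>\<kappa> > 0\<close>], smt (verit) zero_le_power2)+
  moreover obtain p1 C0 where "p1 > 4"
    and "\<forall>L\<ge>1. \<forall>k\<le>L. norm (hidden \<sigma> \<alpha> Abar bbar x L k) powr p1 \<le> C0"
    using bounded by blast
  then have "\<And>L k. 1 \<le> L \<Longrightarrow> k \<le> L \<Longrightarrow> norm (hidden \<sigma> \<alpha> Abar bbar x L k) \<le> C0 powr (1 / p1)"
    by (intro powr_le_imp_le_powr_inverse) auto
  ultimately show ?thesis
    using activation_ok_has_derivative_at_0[OF act] alpha H0 Hode
    by (intro SUP_tendsto_zero_if_eventually_uniform eventually_hidden_uniformly_close_to_ode) auto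
qed

end
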